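(* Let $(f_0,\dots,f_4)$ be a rational solution of $A_4(\alpha_0,\dots,\alpha_4)$. Then each $f_j$ ($0\le j\le4$) is an odd function of $t$, i.e. $f_j(-t)=-f_j(t)$.
   Context: The $A_4^{(1)}$ Painlevé equation $A_4(\alpha_0,\dots,\alpha_4)$ with complex parameters $\alpha_j$ is the system for five functions $f_0,\dots,f_4$ of $t$ (indices in $\mathbb{Z}/5\mathbb{Z}$, ${}'=d/dt$): $f_j'=f_j(f_{j+1}-f_{j+2}+f_{j+3}-f_{j+4})+\alpha_j$ ($j=0,\dots,4$), $f_0+\dots+f_4=t$; hence $\sum_j\alpha_j=1$. A rational solution is a tuple of rational functions of $t$ satisfying it. *)

theory Defs
  imports Complex_Main "HOL-Computational_Algebra.Polynomial"
begin

text \<open>A rational function of t is represented by a numerator and a nonzero denominator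
  polynomial; the tuple (f_0,...,f_4) is given by P j / Q j, indices taken mod 5.\<close>

definition ratf :: "(nat \<Rightarrow> complex poly) \<Rightarrow> (nat \<Rightarrow> complex poly) \<Rightarrow> nat \<Rightarrow> complex \<Rightarrow> complex" where
  "ratf P Q j t = poly (P (j mod 5)) t / poly (Q (j mod 5)) t"

definition A4_rational_solution ::
  "(nat \<Rightarrow> complex) \<Rightarrow> (nat \<Rightarrow> complex poly) \<Rightarrow> (nat \<Rightarrow> complex poly) \<Rightarrow> bool" where
  "A4_rational_solution \<alpha> P Q \<longleftrightarrow>
     (\<forall>j<5. Q j \<noteq> 0) \<and>
     (\<forall>t. (\<forall>j<5. poly (Q j) t \<noteq> 0) \<longrightarrow>
        (\<forall>j<5. (ratf P Q j has_field_derivative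
                 (ratf P Q j t * (ratf P Q (j+1) t - ratf P Q (j+2) t + ratf P Q (j+3) t
                                  - ratf P Q (j+4) t) + \<alpha> j)) (at t)) \<and>
        (\<Sum>j<5. ratf P Q j t) = t)"

end

theory Submission
  imports Defs
begin

text \<open>Clear denominators: f_j = u_j / W with polynomials u_j, W. If some f_j grew faster
  than t, the top coefficients x_j of the u_j would satisfy
  x_j (x_{j+1} - x_{j+2} + x_{j+3} - x_{j+4}) = 0 together with \<Sum> x_j = 0, and this
  system has only the trivial solution; so f_j(t) ~ a_j t with \<Sum> a_j = 1. Comparing top
  coefficients in the equation for the difference of two solutions with the same growth
  rates a_j gives the linearisation of that system at a, which again has only the trivial
  solution: a rational solution is determined by its growth rates. Finally
  t \<mapsto> -f_j(-t) is a rational solution of the same equation with the same growth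
  rates, hence equal to f_j.\<close>

definition cyc_alt :: "(nat \<Rightarrow> 'a::ab_group_add) \<Rightarrow> nat \<Rightarrow> 'a" where
  "cyc_alt x j = x (Suc j mod 5) - x ((j + 2) mod 5) + x ((j + 3) mod 5) - x ((j + 4) mod 5)"

lemma cyc_alt_simps:
  "cyc_alt x 0 = x 1 - x 2 + x 3 - x 4"
  "cyc_alt x 1 = x 2 - x 3 + x 4 - x 0"
  "cyc_alt x 2 = x 3 - x 4 + x 0 - x 1"
  "cyc_alt x 3 = x 4 - x 0 + x 1 - x 2"
  "cyc_alt x 4 = x 0 - x 1 + x 2 - x 3"
  by (simp_all add: cyc_alt_def numeral_2_eq_2)

lemma cyc_alt_diff: "cyc_alt (\<lambda>i. x i - y i) j = cyc_alt x j - cyc_alt y j"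
  by (simp add: cyc_alt_def algebra_simps)

lemma cyc_alt_divide:
  fixes x :: "nat \<Rightarrow> 'a::field"
  shows "cyc_alt (\<lambda>i. x i / c) j = cyc_alt x j / c"
  by (simp add: cyc_alt_def diff_divide_distrib add_divide_distrib)

lemma all_less_5: "(\<forall>j<5. P j) \<longleftrightarrow> P 0 \<and> P 1 \<and> P 2 \<and> P 3 \<and> P (4::nat)"
  by (auto simp: less_Suc_eq numeral_eq_Suc)

lemma sum_less_5: "(\<Sum>j<5. x j) = x 0 + x 1 + x 2 + x 3 + x (4::nat)"
  by (simp add: eval_nat_numeral)

lemma zero_sum_quadratic_system:
  fixes x0 x1 x2 x3 x4 :: "'a::field_char_0"
  assumes "x0 * (x1 - x2 + x3 - x4) = 0" "x1 * (x2 - x3 + x4 - x0) = 0"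
    "x2 * (x3 - x4 + x0 - x1) = 0" "x3 * (x4 - x0 + x1 - x2) = 0"
    "x4 * (x0 - x1 + x2 - x3) = 0" "x0 + x1 + x2 + x3 + x4 = 0"
  shows "x0 = 0"
  using assms by algebra

lemma linearized_quadratic_system:
  fixes x0 x1 x2 x3 x4 e0 e1 e2 e3 e4 :: "'a::field_char_0"
  assumes "x0 * (x1 - x2 + x3 - x4) = 0" "x1 * (x2 - x3 + x4 - x0) = 0"
    "x2 * (x3 - x4 + x0 - x1) = 0" "x3 * (x4 - x0 + x1 - x2) = 0"
    "x4 * (x0 - x1 + x2 - x3) = 0" "x0 + x1 + x2 + x3 + x4 = 1"
    "e0 * (x1 - x2 + x3 - x4) + x0 * (e1 - e2 + e3 - e4) = 0"
    "e1 * (x2 - x3 + x4 - x0) + x1 * (e2 - e3 + e4 - e0) = 0"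
    "e2 * (x3 - x4 + x0 - x1) + x2 * (e3 - e4 + e0 - e1) = 0"
    "e3 * (x4 - x0 + x1 - x2) + x3 * (e4 - e0 + e1 - e2) = 0"
    "e4 * (x0 - x1 + x2 - x3) + x4 * (e0 - e1 + e2 - e3) = 0"
    "e0 + e1 + e2 + e3 + e4 = 0"
  shows "e0 = 0"
  using assms by algebra

lemma cyc_alt_zero_sum_solution:
  fixes x :: "nat \<Rightarrow> 'a::field_char_0"
  assumes "\<forall>j<5. x j * cyc_alt x j = 0" and "(\<Sum>j<5. x j) = 0"
  shows "\<forall>j<5. x j = 0"
proof -
  have h: "x 0 * (x 1 - x 2 + x 3 - x 4) = 0" "x 1 * (x 2 - x 3 + x 4 - x 0) = 0"
    "x 2 * (x 3 - x 4 + x 0 - x 1) = 0" "x 3 * (x 4 - x 0 + x 1 - x 2) = 0"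
    "x 4 * (x 0 - x 1 + x 2 - x 3) = 0"
    using assms(1) unfolding all_less_5 cyc_alt_simps by blast+
  have "x 0 + x 1 + x 2 + x 3 + x 4 = 0"
    using assms(2) by (simp add: sum_less_5)
  then show ?thesis
    unfolding all_less_5
    using zero_sum_quadratic_system[OF h(1-5)] zero_sum_quadratic_system[OF h(2-5,1)]
      zero_sum_quadratic_system[OF h(3-5,1-2)] zero_sum_quadratic_system[OF h(4-5,1-3)]
      zero_sum_quadratic_system[OF h(5,1-4)]
    by (simp add: ac_simps)
qed

lemma cyc_alt_linearized_solution:
  fixes x e :: "nat \<Rightarrow> 'a::field_char_0"
  assumes "\<forall>j<5. x j * cyc_alt x j = 0" and "(\<Sum>j<5. x j) = 1"
    and "\<forall>j<5. e j * cyc_alt x j + x j * cyc_alt e j = 0" and "(\<Sum>j<5. e j) = 0"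
  shows "\<forall>j<5. e j = 0"
proof -
  have h: "x 0 * (x 1 - x 2 + x 3 - x 4) = 0" "x 1 * (x 2 - x 3 + x 4 - x 0) = 0"
    "x 2 * (x 3 - x 4 + x 0 - x 1) = 0" "x 3 * (x 4 - x 0 + x 1 - x 2) = 0"
    "x 4 * (x 0 - x 1 + x 2 - x 3) = 0"
    using assms(1) unfolding all_less_5 cyc_alt_simps by blast+
  have g: "e 0 * (x 1 - x 2 + x 3 - x 4) + x 0 * (e 1 - e 2 + e 3 - e 4) = 0"
    "e 1 * (x 2 - x 3 + x 4 - x 0) + x 1 * (e 2 - e 3 + e 4 - e 0) = 0"
    "e 2 * (x 3 - x 4 + x 0 - x 1) + x 2 * (e 3 - e 4 + e 0 - e 1) = 0"
    "e 3 * (x 4 - x 0 + x 1 - x 2) + x 3 * (e 4 - e 0 + e 1 - e 2) = 0"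
    "e 4 * (x 0 - x 1 + x 2 - x 3) + x 4 * (e 0 - e 1 + e 2 - e 3) = 0"
    using assms(3) unfolding all_less_5 cyc_alt_simps by blast+
  have "x 0 + x 1 + x 2 + x 3 + x 4 = 1" "e 0 + e 1 + e 2 + e 3 + e 4 = 0"
    using assms(2,4) by (simp_all add: sum_less_5)
  then show ?thesis
    unfolding all_less_5
    using linearized_quadratic_system[OF h(1-5) _ g(1-5)]
      linearized_quadratic_system[OF h(2-5,1) _ g(2-5,1)]
      linearized_quadratic_system[OF h(3-5,1-2) _ g(3-5,1-2)]
      linearized_quadratic_system[OF h(4-5,1-3) _ g(4-5,1-3)]
      linearized_quadratic_system[OF h(5,1-4) _ g(5,1-4)]
    by (simp add: ac_simps)
qed

lemma coeff_mult_degree_le: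
  assumes "degree p \<le> a" and "degree q \<le> b"
  shows "coeff (p * q) (a + b) = coeff p a * coeff q b"
proof (cases "degree p = a \<and> degree q = b")
  case True
  then show ?thesis using coeff_mult_degree_sum[of p q] by simp
next
  case False
  then have "degree (p * q) < a + b" and "coeff p a = 0 \<or> coeff q b = 0"
    using assms degree_mult_le[of p q] by (auto intro: coeff_eq_0)
  then show ?thesis by (auto intro: coeff_eq_0)
qed

lemma degree_le_if_coeff_Suc_eq_0:
  "degree p \<le> Suc m \<Longrightarrow> coeff p (Suc m) = 0 \<Longrightarrow> degree p \<le> m"
  by (metis le_SucE leading_coeff_0_iff degree_0 le0)

lemma ex_nonzero_max_degree:
  fixes p :: "'b \<Rightarrow> 'a::zero poly"
  assumes "finite A" and "i \<in> A" and "p i \<noteq> 0"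
  obtains k where "k \<in> A" and "p k \<noteq> 0" and "\<And>j. j \<in> A \<Longrightarrow> degree (p j) \<le> degree (p k)"
proof -
  have "Max ((\<lambda>j. degree (p j)) ` A) \<in> (\<lambda>j. degree (p j)) ` A"
    using assms(1,2) by (intro Max_in) auto
  then obtain k where k: "k \<in> A" and "degree (p k) = Max ((\<lambda>j. degree (p j)) ` A)"
    by auto
  then have max: "\<And>j. j \<in> A \<Longrightarrow> degree (p j) \<le> degree (p k)"
    using assms(1) by simp
  show thesis
  proof (cases "p k = 0")
    case True
    then show thesis using that[OF assms(2,3)] max by simp
  next
    case False
    then show thesis using that[OF k _ max] by blast
  qed
qed

lemma coeff_cyc_alt: "coeff (cyc_alt u j) n = cyc_alt (\<lambda>i. coeff (u i) n) j"
  by (simp add: cyc_alt_def)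

lemma degree_cyc_alt_le: "(\<And>i. i < 5 \<Longrightarrow> degree (u i) \<le> n) \<Longrightarrow> degree (cyc_alt u j) \<le> n"
  unfolding cyc_alt_def by (intro degree_add_le degree_diff_le) auto

lemma coeff_mult_cyc_alt:
  assumes "degree p \<le> a" and "\<And>i. i < 5 \<Longrightarrow> degree (u i) \<le> b"
  shows "coeff (p * cyc_alt u j) (a + b) = coeff p a * cyc_alt (\<lambda>i. coeff (u i) b) j"
  using coeff_mult_degree_le[OF assms(1) degree_cyc_alt_le[OF assms(2)]] by (simp add: coeff_cyc_alt)

lemma poly_eq_if_eq_off_zeros:
  fixes p q W :: "'a::{idom,ring_char_0} poly"
  assumes "W \<noteq> 0" and "\<And>t. poly W t \<noteq> 0 \<Longrightarrow> poly p t = poly q t"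
  shows "p = q"
proof -
  have "(p - q) * W = 0"
    using assms(2) by (subst poly_all_0_iff_0[symmetric]) auto
  with assms(1) show ?thesis by simp
qed

lemma poly_quotient_deriv:
  fixes p q :: "'a::real_normed_field poly"
  assumes f: "(f has_field_derivative D) (at t)" and q: "poly q t \<noteq> 0"
    and f_eq: "\<And>s. poly q s \<noteq> 0 \<Longrightarrow> f s = poly p s / poly q s"
  shows "poly (pderiv p * q - p * pderiv q) t = D * (poly q t * poly q t)"
proof -
  have "((\<lambda>s. poly p s / poly q s) has_field_derivative D) (at t)"
  proof (rule has_field_derivative_transform_within_open[OF f])
    show "open {s. poly q s \<noteq> 0}"
      by (intro open_Collect_neq continuous_intros)
  qed (use q f_eq in auto)
  moreover have "((\<lambda>s. poly p s / poly q s) has_field_derivative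
      poly (pderiv p * q - p * pderiv q) t / (poly q t * poly q t)) (at t)"
    using DERIV_divide[OF poly_DERIV poly_DERIV q] by simp
  ultimately have "D = poly (pderiv p * q - p * pderiv q) t / (poly q t * poly q t)"
    by (rule DERIV_unique)
  then show ?thesis
    using q by simp
qed

text \<open>A rational solution written over a common denominator, f_j = u_j / W, with the
  equations multiplied through by W^2.\<close>

definition A4_poly_solution :: "(nat \<Rightarrow> 'a::field_char_0) \<Rightarrow> 'a poly \<Rightarrow> (nat \<Rightarrow> 'a poly) \<Rightarrow> bool" where
  "A4_poly_solution \<alpha> W u \<longleftrightarrow> W \<noteq> 0 \<and>
     (\<forall>j<5. pderiv (u j) * W - u j * pderiv W = u j * cyc_alt u j + smult (\<alpha> j) (W * W)) \<and>
     (\<Sum>j<5. u j) = [:0, 1:] * W"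

lemma
  assumes "A4_poly_solution \<alpha> W u"
  shows A4_poly_solution_nonzero: "W \<noteq> 0"
    and A4_poly_solution_ode: "j < 5 \<Longrightarrow>
      pderiv (u j) * W - u j * pderiv W = u j * cyc_alt u j + smult (\<alpha> j) (W * W)"
    and A4_poly_solution_sum: "(\<Sum>j<5. u j) = [:0, 1:] * W"
  using assms unfolding A4_poly_solution_def by auto

lemma A4_poly_solution_leading_coeffs:
  assumes sol: "A4_poly_solution \<alpha> W u" and n: "degree W < n"
    and deg: "\<And>j. j < 5 \<Longrightarrow> degree (u j) \<le> n"
  shows "\<forall>j<5. coeff (u j) n * cyc_alt (\<lambda>i. coeff (u i) n) j = 0"
    and "(\<Sum>j<5. coeff (u j) n) = coeff W (n - 1)"
proof -
  show "\<forall>j<5. coeff (u j) n * cyc_alt (\<lambda>i. coeff (u i) n) j = 0"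
  proof (intro allI impI)
    fix j :: nat assume j: "j < 5"
    \<comment> \<open>in degree 2n only the quadratic term survives\<close>
    have "degree (pderiv (u j)) \<le> n" "degree (pderiv W) \<le> degree W"
      using deg[OF j] by (simp_all add: degree_pderiv)
    then have "degree (pderiv (u j) * W) \<le> n + degree W" "degree (u j * pderiv W) \<le> n + degree W"
      using deg[OF j] degree_mult_le[of "pderiv (u j)" W] degree_mult_le[of "u j" "pderiv W"]
      by linarith+
    then have lhs: "coeff (pderiv (u j) * W - u j * pderiv W) (n + n) = 0"
      using n by (intro coeff_eq_0 le_less_trans[OF degree_diff_le]) auto
    have inhom: "coeff (smult (\<alpha> j) (W * W)) (n + n) = 0"
      using n degree_mult_le[of W W] by (intro coeff_eq_0 le_less_trans[OF degree_smult_le]) linarith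
    have "coeff (u j * cyc_alt u j) (n + n) =
        coeff (pderiv (u j) * W - u j * pderiv W - smult (\<alpha> j) (W * W)) (n + n)"
      by (simp add: A4_poly_solution_ode[OF sol j])
    then have "coeff (u j * cyc_alt u j) (n + n) = 0"
      unfolding coeff_diff[of "pderiv (u j) * W - u j * pderiv W"] lhs inhom by simp
    then show "coeff (u j) n * cyc_alt (\<lambda>i. coeff (u i) n) j = 0"
      by (simp add: coeff_mult_cyc_alt deg j)
  qed
  have "(\<Sum>j<5. coeff (u j) n) = coeff ([:0, 1:] * W) n"
    by (simp add: coeff_sum[symmetric] A4_poly_solution_sum[OF sol])
  also have "\<dots> = coeff W (n - 1)"
    using n by (cases n) (simp_all add: coeff_pCons)
  finally show "(\<Sum>j<5. coeff (u j) n) = coeff W (n - 1)" .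
qed

lemma A4_poly_solution_degree_le:
  assumes sol: "A4_poly_solution \<alpha> W u" and j: "j < 5"
  shows "degree (u j) \<le> degree W + 1"
proof (rule ccontr)
  assume big: "\<not> degree (u j) \<le> degree W + 1"
  then have "u j \<noteq> 0" by auto
  with j obtain k where k: "k < 5" "u k \<noteq> 0" and max: "\<And>i. i < 5 \<Longrightarrow> degree (u i) \<le> degree (u k)"
    using ex_nonzero_max_degree[of "{..<5}" j u] by auto
  define n where "n = degree (u k)"
  have n: "degree W + 1 < n"
    using max[OF j] big unfolding n_def by linarith
  have "\<forall>i<5. coeff (u i) n = 0"
  proof (rule cyc_alt_zero_sum_solution)
    show "\<forall>i<5. coeff (u i) n * cyc_alt (\<lambda>i. coeff (u i) n) i = 0"
      using A4_poly_solution_leading_coeffs(1)[OF sol, of n] n max unfolding n_def by simp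
    show "(\<Sum>i<5. coeff (u i) n) = 0"
      using A4_poly_solution_leading_coeffs(2)[OF sol, of n] n max unfolding n_def
      by (simp add: coeff_eq_0)
  qed
  with k show False unfolding n_def by (metis leading_coeff_0_iff)
qed

lemma A4_poly_solution_diff:
  assumes sol_u: "A4_poly_solution \<alpha> W u" and sol_v: "A4_poly_solution \<alpha> W v" and j: "j < 5"
  defines "h \<equiv> \<lambda>i. u i - v i"
  shows "pderiv (h j) * W - h j * pderiv W =
    h j * cyc_alt u j + u j * cyc_alt h j - h j * cyc_alt h j"
proof -
  have "pderiv (h j) * W - h j * pderiv W = u j * cyc_alt u j - v j * cyc_alt v j"
    using A4_poly_solution_ode[OF sol_u j] A4_poly_solution_ode[OF sol_v j]
    unfolding h_def by (simp add: pderiv_diff algebra_simps)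
  then show ?thesis
    unfolding h_def cyc_alt_diff by (simp add: algebra_simps)
qed

lemma A4_poly_solution_diff_leading_coeffs:
  assumes sol_u: "A4_poly_solution \<alpha> W u" and sol_v: "A4_poly_solution \<alpha> W v"
    and deg_h: "\<And>i. i < 5 \<Longrightarrow> degree (u i - v i) \<le> d" and d: "d \<le> degree W" and j: "j < 5"
  defines "m \<equiv> degree W"
  shows "coeff (u j - v j) d * cyc_alt (\<lambda>i. coeff (u i) (m + 1)) j
    + coeff (u j) (m + 1) * cyc_alt (\<lambda>i. coeff (u i - v i) d) j = 0"
proof -
  define h where "h = (\<lambda>i. u i - v i)"
  have deg_u: "\<And>i. i < 5 \<Longrightarrow> degree (u i) \<le> m + 1"
    using A4_poly_solution_degree_le[OF sol_u] unfolding m_def by blast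
  have "degree (pderiv (h j)) \<le> d" "degree (pderiv W) \<le> m"
    using deg_h[OF j] unfolding h_def m_def by (simp_all add: degree_pderiv)
  then have "degree (pderiv (h j) * W) \<le> d + m" "degree (h j * pderiv W) \<le> d + m"
    using deg_h[OF j] degree_mult_le[of "pderiv (h j)" W] degree_mult_le[of "h j" "pderiv W"]
    unfolding h_def m_def by linarith+
  then have lhs: "coeff (pderiv (h j) * W - h j * pderiv W) (d + (m + 1)) = 0"
    by (intro coeff_eq_0 le_less_trans[OF degree_diff_le]) auto
  have "degree (h j * cyc_alt h j) \<le> d + d"
    using deg_h[OF j] degree_cyc_alt_le[of h d j] deg_h degree_mult_le[of "h j" "cyc_alt h j"]
    unfolding h_def by fastforce
  then have quad: "coeff (h j * cyc_alt h j) (d + (m + 1)) = 0"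
    using d unfolding m_def by (intro coeff_eq_0) linarith
  have "pderiv (h j) * W - h j * pderiv W = h j * cyc_alt u j + u j * cyc_alt h j - h j * cyc_alt h j"
    using A4_poly_solution_diff[OF sol_u sol_v j] unfolding h_def by simp
  with lhs have "coeff (h j * cyc_alt u j + u j * cyc_alt h j - h j * cyc_alt h j) (d + (m + 1)) = 0"
    by simp
  then have "coeff (h j * cyc_alt u j) (d + (m + 1)) + coeff (u j * cyc_alt h j) (d + (m + 1)) = 0"
    by (simp only: coeff_diff coeff_add quad) simp
  moreover have "coeff (h j * cyc_alt u j) (d + (m + 1)) = coeff (h j) d * cyc_alt (\<lambda>i. coeff (u i) (m + 1)) j"
    using deg_h deg_u j unfolding h_def by (intro coeff_mult_cyc_alt) auto
  moreover have "coeff (u j * cyc_alt h j) (d + (m + 1)) = coeff (u j) (m + 1) * cyc_alt (\<lambda>i. coeff (h i) d) j"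
    using coeff_mult_cyc_alt[of "u j" "m + 1" h d j] deg_u[OF j] deg_h unfolding h_def
    by (simp add: add.commute)
  ultimately show ?thesis unfolding h_def by simp
qed

lemma A4_poly_solution_unique:
  assumes sol_u: "A4_poly_solution \<alpha> W u" and sol_v: "A4_poly_solution \<alpha> W v"
    and same_growth: "\<And>i. i < 5 \<Longrightarrow> coeff (u i) (degree W + 1) = coeff (v i) (degree W + 1)"
    and j: "j < 5"
  shows "u j = v j"
proof (rule ccontr)
  define m where "m = degree W"
  define h where "h = (\<lambda>i. u i - v i)"
  assume "u j \<noteq> v j"
  with j obtain k where k: "k < 5" "h k \<noteq> 0" and max: "\<And>i. i < 5 \<Longrightarrow> degree (h i) \<le> degree (h k)"
    using ex_nonzero_max_degree[of "{..<5}" j h] unfolding h_def by auto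
  define d where "d = degree (h k)"
  have "degree (h i) \<le> m" if i: "i < 5" for i
  proof (rule degree_le_if_coeff_Suc_eq_0)
    show "degree (h i) \<le> Suc m"
      using A4_poly_solution_degree_le[OF sol_u i] A4_poly_solution_degree_le[OF sol_v i]
      unfolding h_def m_def by (intro degree_diff_le) auto
    show "coeff (h i) (Suc m) = 0"
      using same_growth[OF i] unfolding h_def m_def by simp
  qed
  with k have d: "d \<le> m" unfolding d_def by blast
  define L where "L = lead_coeff W"
  have L: "L \<noteq> 0"
    using A4_poly_solution_nonzero[OF sol_u] unfolding L_def by simp
  define c where "c = (\<lambda>i. coeff (u i) (m + 1) / L)"
  define e where "e = (\<lambda>i. coeff (h i) d)"
  have "\<forall>i<5. e i = 0"
  proof (rule cyc_alt_linearized_solution)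
    have "degree W < m + 1" "\<And>i. i < 5 \<Longrightarrow> degree (u i) \<le> m + 1"
      using A4_poly_solution_degree_le[OF sol_u] unfolding m_def by auto
    note lead = A4_poly_solution_leading_coeffs[OF sol_u this]
    show "\<forall>i<5. c i * cyc_alt c i = 0"
      using lead(1) unfolding c_def cyc_alt_divide by simp
    show "(\<Sum>i<5. c i) = 1"
      using lead(2) L unfolding c_def L_def m_def by (simp add: sum_divide_distrib[symmetric])
    show "\<forall>i<5. e i * cyc_alt c i + c i * cyc_alt e i = 0"
      using A4_poly_solution_diff_leading_coeffs[OF sol_u sol_v _ d[unfolded m_def]] max L
      unfolding c_def e_def cyc_alt_divide h_def d_def m_def
      by (simp add: divide_simps)
    show "(\<Sum>i<5. e i) = 0"
      using A4_poly_solution_sum[OF sol_u] A4_poly_solution_sum[OF sol_v]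
      unfolding e_def h_def by (simp add: coeff_sum[symmetric] sum_subtractf)
  qed
  with k show False unfolding e_def d_def by (metis leading_coeff_0_iff)
qed

lemma A4_poly_solution_mult_denom:
  assumes sol: "A4_poly_solution \<alpha> W u" and R: "R \<noteq> 0"
  shows "A4_poly_solution \<alpha> (W * R) (\<lambda>j. u j * R)"
  unfolding A4_poly_solution_def
proof (intro conjI allI impI)
  show "W * R \<noteq> 0"
    using A4_poly_solution_nonzero[OF sol] R by simp
  fix j :: nat assume j: "j < 5"
  have "pderiv (u j * R) * (W * R) - u j * R * pderiv (W * R) =
      (pderiv (u j) * W - u j * pderiv W) * R * R"
    by (simp add: pderiv_mult algebra_simps)
  also have "\<dots> = (u j * cyc_alt u j + smult (\<alpha> j) (W * W)) * R * R"
    by (simp add: A4_poly_solution_ode[OF sol j])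
  also have "\<dots> = u j * R * (cyc_alt u j * R) + smult (\<alpha> j) (W * R * (W * R))"
    by (simp add: algebra_simps)
  also have "cyc_alt u j * R = cyc_alt (\<lambda>i. u i * R) j"
    by (simp add: cyc_alt_def algebra_simps)
  finally show "pderiv (u j * R) * (W * R) - u j * R * pderiv (W * R) =
      u j * R * cyc_alt (\<lambda>i. u i * R) j + smult (\<alpha> j) (W * R * (W * R))" .
next
  show "(\<Sum>j<5. u j * R) = [:0, 1:] * (W * R)"
    by (simp add: sum_distrib_right[symmetric] A4_poly_solution_sum[OF sol])
qed

lemma A4_poly_solution_reflect:
  assumes sol: "A4_poly_solution \<alpha> W u"
  shows "A4_poly_solution \<alpha> (W \<circ>\<^sub>p [:0, -1:]) (\<lambda>j. - (u j \<circ>\<^sub>p [:0, -1:]))"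
  unfolding A4_poly_solution_def
proof (intro conjI allI impI)
  show "W \<circ>\<^sub>p [:0, -1:] \<noteq> 0"
    using A4_poly_solution_nonzero[OF sol] by (simp add: pcompose_eq_0_iff)
  fix j :: nat assume j: "j < 5"
  have "cyc_alt (\<lambda>i. - (u i \<circ>\<^sub>p [:0, -1:])) j = - (cyc_alt u j \<circ>\<^sub>p [:0, -1:])"
    by (simp add: cyc_alt_def pcompose_diff pcompose_add)
  moreover have "pderiv (- (u j \<circ>\<^sub>p [:0, -1:])) * (W \<circ>\<^sub>p [:0, -1:])
        - - (u j \<circ>\<^sub>p [:0, -1:]) * pderiv (W \<circ>\<^sub>p [:0, -1:]) =
      (pderiv (u j) * W - u j * pderiv W) \<circ>\<^sub>p [:0, -1:]"
    by (simp add: pderiv_minus pderiv_pcompose pderiv_pCons pcompose_diff pcompose_mult)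
  ultimately show "pderiv (- (u j \<circ>\<^sub>p [:0, -1:])) * (W \<circ>\<^sub>p [:0, -1:])
        - - (u j \<circ>\<^sub>p [:0, -1:]) * pderiv (W \<circ>\<^sub>p [:0, -1:]) =
      - (u j \<circ>\<^sub>p [:0, -1:]) * cyc_alt (\<lambda>i. - (u i \<circ>\<^sub>p [:0, -1:])) j
        + smult (\<alpha> j) (W \<circ>\<^sub>p [:0, -1:] * W \<circ>\<^sub>p [:0, -1:])"
    by (simp add: A4_poly_solution_ode[OF sol j] pcompose_add pcompose_mult pcompose_smult)
next
  have "(\<Sum>j<5. - (u j \<circ>\<^sub>p [:0, -1:])) = - (([:0, 1:] * W) \<circ>\<^sub>p [:0, -1:])"
    by (simp add: sum_negf pcompose_sum[symmetric] A4_poly_solution_sum[OF sol])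
  then show "(\<Sum>j<5. - (u j \<circ>\<^sub>p [:0, -1:])) = [:0, 1:] * W \<circ>\<^sub>p [:0, -1:]"
    by (simp add: pcompose_mult pcompose_pCons)
qed

lemma A4_poly_solution_odd:
  assumes sol: "A4_poly_solution \<alpha> W u" and j: "j < 5"
  shows "u j * (W \<circ>\<^sub>p [:0, -1:]) = - (u j \<circ>\<^sub>p [:0, -1:]) * W"
proof -
  define W' where "W' = W \<circ>\<^sub>p [:0, -1:]"
  define m where "m = degree W"
  have W: "W \<noteq> 0"
    using A4_poly_solution_nonzero[OF sol] .
  have W': "W' \<noteq> 0" "degree W' = m" "coeff W' m = (-1) ^ m * coeff W m"
    using W unfolding W'_def m_def
    by (simp_all add: pcompose_eq_0_iff degree_pcompose coeff_pcompose_linear)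
  have sol_f: "A4_poly_solution \<alpha> (W * W') (\<lambda>i. u i * W')"
    by (rule A4_poly_solution_mult_denom[OF sol W'(1)])
  have sol_g: "A4_poly_solution \<alpha> (W * W') (\<lambda>i. - (u i \<circ>\<^sub>p [:0, -1:]) * W)"
    using A4_poly_solution_mult_denom[OF A4_poly_solution_reflect[OF sol] W]
    unfolding W'_def by (simp add: mult.commute)
  have "u j * W' = - (u j \<circ>\<^sub>p [:0, -1:]) * W"
  proof (rule A4_poly_solution_unique[OF sol_f sol_g _ j])
    fix i :: nat assume i: "i < 5"
    have deg: "degree (u i) \<le> m + 1"
      using A4_poly_solution_degree_le[OF sol i] unfolding m_def .
    have N: "degree (W * W') + 1 = (m + 1) + m"
      using W W' unfolding m_def by (simp add: degree_mult_eq)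
    have "coeff (u i * W') ((m + 1) + m) = coeff (u i) (m + 1) * coeff W' m"
      using deg W' by (intro coeff_mult_degree_le) auto
    moreover have "coeff (- (u i \<circ>\<^sub>p [:0, -1:]) * W) ((m + 1) + m) =
        - coeff (u i \<circ>\<^sub>p [:0, -1:]) (m + 1) * coeff W m"
      using deg unfolding m_def by (subst coeff_mult_degree_le) (simp_all add: degree_pcompose)
    ultimately show "coeff (u i * W') (degree (W * W') + 1) =
        coeff (- (u i \<circ>\<^sub>p [:0, -1:]) * W) (degree (W * W') + 1)"
      unfolding N W'(3) by (simp add: coeff_pcompose_linear)
  qed
  then show ?thesis unfolding W'_def .
qed

lemma ratf_mod: "ratf P Q (j mod 5) = ratf P Q j"
  by (simp add: ratf_def fun_eq_iff)

lemma A4_rational_solution_imp_poly_solution: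
  assumes sol: "A4_rational_solution \<alpha> P Q"
  shows "A4_poly_solution \<alpha> (\<Prod>i<5. Q i) (\<lambda>j. P j * (\<Prod>i\<in>{..<5} - {j}. Q i))"
proof -
  define W where "W = (\<Prod>i<5. Q i)"
  define u where "u = (\<lambda>j. P j * (\<Prod>i\<in>{..<5} - {j}. Q i))"
  have W: "W \<noteq> 0"
    using sol unfolding W_def A4_rational_solution_def by simp
  have W_t: "poly W t \<noteq> 0 \<longleftrightarrow> (\<forall>j<5. poly (Q j) t \<noteq> 0)" for t
    unfolding W_def by (auto simp: poly_prod)
  have f_eq: "ratf P Q j t = poly (u j) t / poly W t" if "j < 5" "poly W t \<noteq> 0" for j t
  proof -
    have "W = Q j * (\<Prod>i\<in>{..<5} - {j}. Q i)"
      unfolding W_def using that(1) by (simp add: prod.remove)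
    then show ?thesis
      using that unfolding u_def ratf_def by (simp add: poly_prod)
  qed
  have alt_eq: "cyc_alt (\<lambda>i. ratf P Q i t) j = poly (cyc_alt u j) t / poly W t"
    if "poly W t \<noteq> 0" for j t
    using that by (simp add: cyc_alt_def f_eq diff_divide_distrib add_divide_distrib)
  have ode: "(ratf P Q j has_field_derivative
      ratf P Q j t * cyc_alt (\<lambda>i. ratf P Q i t) j + \<alpha> j) (at t)"
    if "j < 5" "poly W t \<noteq> 0" for j t
    using sol that unfolding A4_rational_solution_def W_t cyc_alt_def ratf_mod by auto
  have sum: "(\<Sum>j<5. ratf P Q j t) = t" if "poly W t \<noteq> 0" for t
    using sol that unfolding A4_rational_solution_def W_t by auto
  show ?thesis
    unfolding W_def[symmetric] u_def[symmetric] A4_poly_solution_def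
  proof (intro conjI allI impI W)
    fix j :: nat assume j: "j < 5"
    show "pderiv (u j) * W - u j * pderiv W = u j * cyc_alt u j + smult (\<alpha> j) (W * W)"
    proof (rule poly_eq_if_eq_off_zeros[OF W])
      fix t assume t: "poly W t \<noteq> 0"
      have "poly (pderiv (u j) * W - u j * pderiv W) t =
          (ratf P Q j t * cyc_alt (\<lambda>i. ratf P Q i t) j + \<alpha> j) * (poly W t * poly W t)"
        using poly_quotient_deriv[OF ode[OF j t] t] f_eq[OF j] by blast
      also have "\<dots> = poly (u j * cyc_alt u j + smult (\<alpha> j) (W * W)) t"
        using t by (simp add: f_eq[OF j t] alt_eq field_simps)
      finally show "poly (pderiv (u j) * W - u j * pderiv W) t =
          poly (u j * cyc_alt u j + smult (\<alpha> j) (W * W)) t" .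
    qed
  next
    show "(\<Sum>j<5. u j) = [:0, 1:] * W"
    proof (rule poly_eq_if_eq_off_zeros[OF W])
      fix t assume t: "poly W t \<noteq> 0"
      have "t = (\<Sum>j<5. poly (u j) t) / poly W t"
        using sum[OF t] by (simp add: f_eq t sum_divide_distrib)
      then show "poly (\<Sum>j<5. u j) t = poly ([:0, 1:] * W) t"
        using t by (simp add: poly_sum field_simps)
    qed
  qed
qed

theorem corollary1p4:
  fixes \<alpha> :: "nat \<Rightarrow> complex" and P Q :: "nat \<Rightarrow> complex poly"
  assumes "A4_rational_solution \<alpha> P Q"
  shows "\<forall>j<5. \<forall>t. poly (Q j) t \<noteq> 0 \<and> poly (Q j) (-t) \<noteq> 0 \<longrightarrow>
           ratf P Q j (-t) = - ratf P Q j t"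
proof (intro allI impI)
  fix j :: nat and t :: complex
  assume j: "j < 5" and t: "poly (Q j) t \<noteq> 0 \<and> poly (Q j) (-t) \<noteq> 0"
  define R where "R = (\<Prod>i\<in>{..<5} - {j}. Q i)"
  have R: "R \<noteq> 0" "R \<circ>\<^sub>p [:0, -1:] \<noteq> 0"
    using assms unfolding R_def A4_rational_solution_def by (auto simp: pcompose_eq_0_iff)
  have W: "(\<Prod>i<5. Q i) = Q j * R"
    using j unfolding R_def by (simp add: prod.remove)
  have "P j * R * ((Q j * R) \<circ>\<^sub>p [:0, -1:]) = - ((P j * R) \<circ>\<^sub>p [:0, -1:]) * (Q j * R)"
    using A4_poly_solution_odd[OF A4_rational_solution_imp_poly_solution[OF assms] j]
    unfolding W R_def[symmetric] .
  then have "R * (R \<circ>\<^sub>p [:0, -1:]) * (P j * (Q j \<circ>\<^sub>p [:0, -1:]) + (P j \<circ>\<^sub>p [:0, -1:]) * Q j) = 0"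
    by (simp add: pcompose_mult algebra_simps)
  with R have "P j * (Q j \<circ>\<^sub>p [:0, -1:]) + (P j \<circ>\<^sub>p [:0, -1:]) * Q j = 0"
    by simp
  from arg_cong[OF this, of "\<lambda>p. poly p t"]
  have "poly (P j) t * poly (Q j) (-t) + poly (P j) (-t) * poly (Q j) t = 0"
    by (simp add: poly_pcompose)
  then have "poly (P j) (-t) * poly (Q j) t = - (poly (P j) t * poly (Q j) (-t))"
    by (simp add: eq_neg_iff_add_eq_0 ac_simps)
  then show "ratf P Q j (-t) = - ratf P Q j t"
    using t j unfolding ratf_def by (simp add: field_simps)
qed

end
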